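(* Consider an extended Runge--Kutta method with parameters $a_{ij}$ ($1\le i\le s$, $1\le j\le m$), $b_i$ ($1\le i\le m$), and full-rank $(m-s)\times m$ matrix $d=(d_{ij})$. Set $a_{ij}=0$ for $i>s$, and let $M$ be the $m\times m$ matrix $M_{ij}=b_ib_j-b_ia_{ij}-b_ja_{ji}$ ($i,j=1,\dots,m$). Let $V$ be an $m\times s$ matrix whose columns form a basis of the nullspace of $d$. If $b_i=0$ for $i=s+1,\dots,m$ and $V^\top MV=0$, then the extended Runge--Kutta method is quadratic-preserving and symplectic.
   Context: For an ODE $\dot z=f(z)$ on $\mathbb{R}^n$, the extended Runge--Kutta method maps $z_0$ to $z_1$ defined by the equations, with unknowns $k_1,\dots,k_m\in\mathbb{R}^n$: $Z_i=z_0+h\sum_{j=1}^m a_{ij}k_j$ ($i=1,\dots,s$), $k_i=f(Z_i)$ ($i=1,\dots,s$), $0=\sum_{j=1}^m d_{ij}k_j$ ($i=1,\dots,m-s$), $z_1=z_0+h\sum_{i=1}^m b_ik_i$. Quadratic-preserving means: whenever $Q(z)=z^\top Cz$ ($C$ symmetric) is a first integral of $f$, every step satisfies $z_1^\top Cz_1=z_0^\top Cz_0$. Symplectic means: applied to any Hamiltonian vector field on $\mathbb{R}^{2n}$ with the canonical symplectic form, the step map $z_0\mapsto z_1$ is symplectic. *)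

theory Defs
  imports "HOL-Analysis.Analysis"
begin

text \<open>Indices are 0-based: stages are indexed by 0..<m, the first
  s of them (0..<s) are the "genuine" stages with k_i = f(Z_i); the rows of d are
  indexed by 0..<m-s.  Coefficients are given as functions on nat, only the values
  inside these index ranges matter.\<close>

definition erk_step ::
  "nat \<Rightarrow> nat \<Rightarrow> (nat \<Rightarrow> nat \<Rightarrow> real) \<Rightarrow> (nat \<Rightarrow> real) \<Rightarrow> (nat \<Rightarrow> nat \<Rightarrow> real)
   \<Rightarrow> ('v::real_vector \<Rightarrow> 'v) \<Rightarrow> real \<Rightarrow> 'v \<Rightarrow> (nat \<Rightarrow> 'v) \<Rightarrow> 'v \<Rightarrow> bool" where
  "erk_step m s a b d f h z0 k z1 \<longleftrightarrow>
     (\<forall>i<s. k i = f (z0 + h *\<^sub>R (\<Sum>j<m. a i j *\<^sub>R k j))) \<and>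
     (\<forall>i<m - s. (\<Sum>j<m. d i j *\<^sub>R k j) = 0) \<and>
     z1 = z0 + h *\<^sub>R (\<Sum>i<m. b i *\<^sub>R k i)"

definition first_integral :: "('v::real_normed_vector \<Rightarrow> 'v) \<Rightarrow> ('v \<Rightarrow> real) \<Rightarrow> bool" where
  "first_integral f Q \<longleftrightarrow> (\<forall>z. \<exists>Q'. (Q has_derivative Q') (at z) \<and> Q' (f z) = 0)"

definition quad_form :: "real^'n^'n \<Rightarrow> real^'n \<Rightarrow> real" where
  "quad_form C z = z \<bullet> (C *v z)"

definition quadratic_preserving ::
  "'n::finite itself \<Rightarrow> nat \<Rightarrow> nat \<Rightarrow> (nat \<Rightarrow> nat \<Rightarrow> real) \<Rightarrow> (nat \<Rightarrow> real) \<Rightarrow> (nat \<Rightarrow> nat \<Rightarrow> real) \<Rightarrow> bool" where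
  "quadratic_preserving (_::'n itself) m s a b d \<longleftrightarrow>
     (\<forall>(f::real^'n \<Rightarrow> real^'n) (C::real^'n^'n) h z0 k z1.
        transpose C = C \<longrightarrow> first_integral f (quad_form C) \<longrightarrow>
        erk_step m s a b d f h z0 k z1 \<longrightarrow> quad_form C z1 = quad_form C z0)"

text \<open>Phase space R^{2n} = real^('n + 'n): coordinates q_i = z$Inl i, p_i = z$Inr i.
  Canonical symplectic form omega(u,v) = u^T J v with J = [[0, I], [-I, 0]].\<close>
definition canon_J :: "real^('n::finite + 'n) \<Rightarrow> real^('n + 'n)" where
  "canon_J g = (\<chi> k. case k of Inl i \<Rightarrow> g $ Inr i | Inr i \<Rightarrow> - (g $ Inl i))"

definition symp_form :: "real^('n::finite + 'n) \<Rightarrow> real^('n + 'n) \<Rightarrow> real" where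
  "symp_form u v = u \<bullet> canon_J v"

text \<open>f is the Hamiltonian vector field of a (twice differentiable) Hamiltonian H:
  f = J^{-1} grad H, i.e. dq/dt = dH/dp, dp/dt = - dH/dq.\<close>
definition hamiltonian_field ::
  "(real^('n::finite + 'n) \<Rightarrow> real) \<Rightarrow> (real^('n + 'n) \<Rightarrow> real^('n + 'n)) \<Rightarrow> bool" where
  "hamiltonian_field H f \<longleftrightarrow>
     (\<exists>gH. (\<forall>z. (H has_derivative (\<lambda>v. gH z \<bullet> v)) (at z)) \<and>
           (\<forall>z. gH differentiable (at z)) \<and>
           (\<forall>z. f z = (\<chi> k. case k of Inl i \<Rightarrow> gH z $ Inr i | Inr i \<Rightarrow> - (gH z $ Inl i))))"

definition symplectic_on ::
  "(real^('n::finite + 'n)) set \<Rightarrow> (real^('n + 'n) \<Rightarrow> real^('n + 'n)) \<Rightarrow> bool" where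
  "symplectic_on U \<Phi> \<longleftrightarrow>
     (\<forall>z\<in>U. \<exists>\<Phi>'. (\<Phi> has_derivative \<Phi>') (at z) \<and>
               (\<forall>u v. symp_form (\<Phi>' u) (\<Phi>' v) = symp_form u v))"

text \<open>The method is symplectic: for every Hamiltonian vector field and step size h,
  whenever the stage values depend differentiably on z0 on an open set U
  (i.e. the step map z0 \<mapsto> z1 is a well-defined differentiable branch on U),
  the step map is symplectic on U.\<close>
definition symplectic_method ::
  "'n::finite itself \<Rightarrow> nat \<Rightarrow> nat \<Rightarrow> (nat \<Rightarrow> nat \<Rightarrow> real) \<Rightarrow> (nat \<Rightarrow> real) \<Rightarrow> (nat \<Rightarrow> nat \<Rightarrow> real) \<Rightarrow> bool" where
  "symplectic_method (_::'n itself) m s a b d \<longleftrightarrow>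
     (\<forall>(H::real^('n + 'n) \<Rightarrow> real) f h U (K::nat \<Rightarrow> real^('n + 'n) \<Rightarrow> real^('n + 'n)).
        hamiltonian_field H f \<longrightarrow> open U \<longrightarrow>
        (\<forall>i<m. \<forall>z\<in>U. K i differentiable (at z)) \<longrightarrow>
        (\<forall>z\<in>U. erk_step m s a b d f h z (\<lambda>i. K i z) (z + h *\<^sub>R (\<Sum>i<m. b i *\<^sub>R K i z))) \<longrightarrow>
        symplectic_on U (\<lambda>z. z + h *\<^sub>R (\<Sum>i<m. b i *\<^sub>R K i z)))"

definition full_row_rank :: "nat \<Rightarrow> nat \<Rightarrow> (nat \<Rightarrow> nat \<Rightarrow> real) \<Rightarrow> bool" where
  "full_row_rank r c d \<longleftrightarrow>
     (\<forall>y::nat \<Rightarrow> real. (\<forall>j<c. (\<Sum>i<r. y i * d i j) = 0) \<longrightarrow> (\<forall>i<r. y i = 0))"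

definition nullspace_basis :: "nat \<Rightarrow> nat \<Rightarrow> nat \<Rightarrow> (nat \<Rightarrow> nat \<Rightarrow> real) \<Rightarrow> (nat \<Rightarrow> nat \<Rightarrow> real) \<Rightarrow> bool" where
  "nullspace_basis r c t d V \<longleftrightarrow>
     (\<forall>x::nat \<Rightarrow> real. (\<forall>i<r. (\<Sum>j<c. d i j * x j) = 0) \<longleftrightarrow>
                       (\<exists>y::nat \<Rightarrow> real. \<forall>j<c. x j = (\<Sum>l<t. V j l * y l))) \<and>
     (\<forall>y::nat \<Rightarrow> real. (\<forall>j<c. (\<Sum>l<t. V j l * y l) = 0) \<longrightarrow> (\<forall>l<t. y l = 0))"

definition a_ext :: "nat \<Rightarrow> (nat \<Rightarrow> nat \<Rightarrow> real) \<Rightarrow> nat \<Rightarrow> nat \<Rightarrow> real" where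
  "a_ext s a i j = (if i < s then a i j else 0)"

definition M_mat :: "nat \<Rightarrow> (nat \<Rightarrow> nat \<Rightarrow> real) \<Rightarrow> (nat \<Rightarrow> real) \<Rightarrow> nat \<Rightarrow> nat \<Rightarrow> real" where
  "M_mat s a b i j = b i * b j - b i * a_ext s a i j - b j * a_ext s a j i"

end

theory Submission
  imports Defs
begin

text \<open>Let B be a bilinear form, u, v vectors and k_i, l_i (i < m) further vectors, and put
  Z_i = u + h sum_j a_ij k_j and W_i = v + h sum_j a_ij l_j (with a_ij = 0 for i >= s).
  Expanding the outputs gives the identity
    B(u + h sum_i b_i k_i, v + h sum_i b_i l_i)
      = B(u, v) + h sum_i b_i (B(k_i, W_i) + B(Z_i, l_i)) + h^2 sum_ij M_ij B(k_i, l_j).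
  The middle sum vanishes term by term: b_i = 0 for i >= s, and for i < s the bracket is the
  infinitesimal invariance of B along the vector field. The constraints put k and l into the
  nullspace of d, so k = V kappa and l = V mu, and the last sum becomes
  sum_pq (V^T M V)_pq B(kappa_p, mu_q) = 0.
  For a quadratic invariant take B(x, y) = x^T C y and k = l. For symplecticity take B the
  symplectic form and k, l the derivatives of the stages in two directions: they satisfy the
  linearised stage equations, whose vector fields J G_i (G_i the derivative of grad H at the
  stage) are infinitesimally symplectic because G_i is symmetric.\<close>

lemma bilinear_sum_left: "bilinear B \<Longrightarrow> B (\<Sum>i\<in>S. f i) y = (\<Sum>i\<in>S. B (f i) y)"
  by (induction S rule: infinite_finite_induct) (auto simp: bilinear_ladd bilinear_lzero)

lemma bilinear_sum_right: "bilinear B \<Longrightarrow> B y (\<Sum>i\<in>S. f i) = (\<Sum>i\<in>S. B y (f i))"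
  by (induction S rule: infinite_finite_induct) (auto simp: bilinear_radd bilinear_rzero)

lemma bilinear_erk_identity:
  fixes B :: "'v::real_vector \<Rightarrow> 'v \<Rightarrow> real"
  assumes bil: "bilinear B"
  shows "B (u + h *\<^sub>R (\<Sum>i<m. b i *\<^sub>R k i)) (v + h *\<^sub>R (\<Sum>i<m. b i *\<^sub>R l i)) = B u v
    + h * (\<Sum>i<m. b i * (B (k i) (v + h *\<^sub>R (\<Sum>j<m. a_ext s a i j *\<^sub>R l j))
                         + B (u + h *\<^sub>R (\<Sum>j<m. a_ext s a i j *\<^sub>R k j)) (l i)))
    + h\<^sup>2 * (\<Sum>i<m. \<Sum>j<m. M_mat s a b i j * B (k i) (l j))"
proof -
  note bilinear_simps = bilinear_ladd[OF bil] bilinear_radd[OF bil] bilinear_lmul[OF bil]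
    bilinear_rmul[OF bil] bilinear_sum_left[OF bil] bilinear_sum_right[OF bil]
  let ?A = "a_ext s a" and ?\<beta> = "\<lambda>i j. B (k i) (l j)"
  have stage: "b i * (B (k i) (v + h *\<^sub>R (\<Sum>j<m. ?A i j *\<^sub>R l j))
                      + B (u + h *\<^sub>R (\<Sum>j<m. ?A i j *\<^sub>R k j)) (l i))
      = b i * (B (k i) v + B u (l i)) + h * (\<Sum>j<m. b i * ?A i j * (?\<beta> i j + ?\<beta> j i))" for i
    by (simp add: bilinear_simps sum_distrib_left sum.distrib algebra_simps)
  have swap: "(\<Sum>i<m. \<Sum>j<m. b j * ?A j i * ?\<beta> i j) = (\<Sum>i<m. \<Sum>j<m. b i * ?A i j * ?\<beta> j i)"
    by (rule sum.swap)
  have M: "(\<Sum>i<m. \<Sum>j<m. M_mat s a b i j * ?\<beta> i j)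
      = (\<Sum>i<m. \<Sum>j<m. b i * b j * ?\<beta> i j) - (\<Sum>i<m. \<Sum>j<m. b i * ?A i j * (?\<beta> i j + ?\<beta> j i))"
    using swap by (simp add: M_mat_def algebra_simps sum_subtractf sum.distrib)
  have product: "B (\<Sum>i<m. b i *\<^sub>R k i) (\<Sum>i<m. b i *\<^sub>R l i) = (\<Sum>i<m. \<Sum>j<m. b i * b j * ?\<beta> i j)"
    by (simp add: bilinear_simps sum_distrib_left algebra_simps) (subst sum.swap, simp add: algebra_simps)
  have expand: "B (u + h *\<^sub>R X) (v + h *\<^sub>R Y) = B u v + h * (B X v + B u Y) + h\<^sup>2 * B X Y"
    for X Y by (simp add: bilinear_simps algebra_simps power2_eq_square)
  show ?thesis
    unfolding expand product stage M
    by (simp add: bilinear_simps sum.distrib sum_distrib_left algebra_simps power2_eq_square)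
qed

lemma bilinear_congruence_sum_eq_0:
  fixes B :: "'v::real_vector \<Rightarrow> 'w::real_vector \<Rightarrow> real"
  assumes bil: "bilinear B"
    and k: "\<forall>j<m. k j = (\<Sum>p<t. V j p *\<^sub>R \<kappa> p)"
    and l: "\<forall>j<m. l j = (\<Sum>q<t. V j q *\<^sub>R \<mu> q)"
    and N: "\<forall>p<t. \<forall>q<t. (\<Sum>i<m. \<Sum>j<m. V i p * N i j * V j q) = 0"
  shows "(\<Sum>i<m. \<Sum>j<m. N i j * B (k i) (l j)) = 0"
proof -
  let ?I = "{..<m} \<times> {..<m}" and ?T = "{..<t} \<times> {..<t}"
  have kl: "B (k i) (l j) = (\<Sum>(p, q)\<in>?T. V i p * V j q * B (\<kappa> p) (\<mu> q))"
    if "(i, j) \<in> ?I" for i j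
    using that k l by (simp add: bilinear_sum[OF bil] bilinear_lmul[OF bil] bilinear_rmul[OF bil]
        case_prod_beta mult_ac)
  have "(\<Sum>i<m. \<Sum>j<m. N i j * B (k i) (l j)) = (\<Sum>(i, j)\<in>?I. N i j * B (k i) (l j))"
    by (simp add: sum.cartesian_product)
  also have "\<dots> = (\<Sum>(i, j)\<in>?I. \<Sum>(p, q)\<in>?T. V i p * N i j * V j q * B (\<kappa> p) (\<mu> q))"
    by (intro sum.cong refl) (auto simp: kl sum_distrib_left case_prod_beta algebra_simps)
  also have "\<dots> = (\<Sum>(p, q)\<in>?T. (\<Sum>(i, j)\<in>?I. V i p * N i j * V j q) * B (\<kappa> p) (\<mu> q))"
    unfolding sum_distrib_right case_prod_beta by (rule sum.swap)
  also have "\<dots> = 0"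
    using N by (intro sum.neutral) (auto simp: sum.cartesian_product[symmetric])
  finally show ?thesis .
qed

lemma bilinear_erk_invariant:
  fixes B :: "'v::real_vector \<Rightarrow> 'v \<Rightarrow> real"
  assumes bil: "bilinear B"
    and b0: "\<forall>i. s \<le> i \<and> i < m \<longrightarrow> b i = 0"
    and MV: "\<forall>p<s. \<forall>q<s. (\<Sum>i<m. \<Sum>j<m. V i p * M_mat s a b i j * V j q) = 0"
    and k: "\<forall>j<m. k j = (\<Sum>p<s. V j p *\<^sub>R \<kappa> p)"
    and l: "\<forall>j<m. l j = (\<Sum>q<s. V j q *\<^sub>R \<mu> q)"
    and stage: "\<forall>i<s. B (k i) (v + h *\<^sub>R (\<Sum>j<m. a i j *\<^sub>R l j))
                      + B (u + h *\<^sub>R (\<Sum>j<m. a i j *\<^sub>R k j)) (l i) = 0"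
  shows "B (u + h *\<^sub>R (\<Sum>i<m. b i *\<^sub>R k i)) (v + h *\<^sub>R (\<Sum>i<m. b i *\<^sub>R l i)) = B u v"
proof -
  have "(\<Sum>i<m. b i * (B (k i) (v + h *\<^sub>R (\<Sum>j<m. a_ext s a i j *\<^sub>R l j))
               + B (u + h *\<^sub>R (\<Sum>j<m. a_ext s a i j *\<^sub>R k j)) (l i))) = 0"
  proof (intro sum.neutral ballI)
    fix i assume "i \<in> {..<m}"
    then show "b i * (B (k i) (v + h *\<^sub>R (\<Sum>j<m. a_ext s a i j *\<^sub>R l j))
               + B (u + h *\<^sub>R (\<Sum>j<m. a_ext s a i j *\<^sub>R k j)) (l i)) = 0"
      using stage b0 by (cases "i < s") (simp_all add: a_ext_def)
  qed
  then show ?thesis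
    using bilinear_erk_identity[OF bil, of u h b k m v l s a] bilinear_congruence_sum_eq_0[OF bil k l MV]
    by simp
qed

lemma nullspace_basis_combination:
  fixes x :: "nat \<Rightarrow> real^'n"
  assumes V: "nullspace_basis r c t d V" and x: "\<forall>i<r. (\<Sum>j<c. d i j *\<^sub>R x j) = 0"
  shows "\<exists>\<kappa>. \<forall>j<c. x j = (\<Sum>l<t. V j l *\<^sub>R \<kappa> l)"
proof -
  have "\<exists>y. \<forall>j<c. x j $ n = (\<Sum>l<t. V j l * y l)" for n
  proof -
    have "\<forall>i<r. (\<Sum>j<c. d i j * x j $ n) = 0"
    proof (intro allI impI)
      fix i assume "i < r"
      then have "(\<Sum>j<c. d i j *\<^sub>R x j) $ n = 0"
        using x by simp
      then show "(\<Sum>j<c. d i j * x j $ n) = 0"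
        by simp
    qed
    then show ?thesis
      using V unfolding nullspace_basis_def by (auto dest: spec[of _ "\<lambda>j. x j $ n"])
  qed
  then obtain y where "\<forall>n. \<forall>j<c. x j $ n = (\<Sum>l<t. V j l * y n l)"
    by metis
  then have "\<forall>j<c. x j = (\<Sum>l<t. V j l *\<^sub>R (\<chi> n. y n l))"
    by (simp add: vec_eq_iff)
  then show ?thesis
    by (rule exI[where x = "\<lambda>l. \<chi> n. y n l"])
qed

lemma quad_form_has_derivative:
  "(quad_form C has_derivative (\<lambda>v. v \<bullet> (C *v z) + z \<bullet> (C *v v))) (at z)"
  unfolding quad_form_def[abs_def]
  by (auto intro!: derivative_eq_intros bounded_linear.has_derivative[OF matrix_vector_mul_bounded_linear])

lemma erk_quadratic_preserving:
  assumes V: "nullspace_basis (m - s) m s d V"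
    and b0: "\<forall>i. s \<le> i \<and> i < m \<longrightarrow> b i = 0"
    and MV: "\<forall>p<s. \<forall>q<s. (\<Sum>i<m. \<Sum>j<m. V i p * M_mat s a b i j * V j q) = 0"
  shows "quadratic_preserving TYPE('n::finite) m s a b d"
  unfolding quadratic_preserving_def
proof (intro allI impI)
  fix f :: "real^'n \<Rightarrow> real^'n" and C :: "real^'n^'n" and h z0 k z1
  assume integral: "first_integral f (quad_form C)" and step: "erk_step m s a b d f h z0 k z1"
  define B where "B x y = x \<bullet> (C *v y)" for x y :: "real^'n"
  have bil: "bilinear B"
    unfolding bilinear_def B_def linear_iff by (simp add: algebra_simps inner_add_left inner_add_right)
  have tangent: "B (f z) z + B z (f z) = 0" for z
  proof -
    obtain Q' where "(quad_form C has_derivative Q') (at z)" and "Q' (f z) = 0"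
      using integral unfolding first_integral_def by blast
    moreover have "(quad_form C has_derivative (\<lambda>v. B v z + B z v)) (at z)"
      using quad_form_has_derivative unfolding B_def .
    ultimately show ?thesis
      using has_derivative_unique by metis
  qed
  from step have stage: "\<forall>i<s. k i = f (z0 + h *\<^sub>R (\<Sum>j<m. a i j *\<^sub>R k j))"
    and constraint: "\<forall>i<m - s. (\<Sum>j<m. d i j *\<^sub>R k j) = 0"
    and z1: "z1 = z0 + h *\<^sub>R (\<Sum>i<m. b i *\<^sub>R k i)"
    unfolding erk_step_def by auto
  obtain \<kappa> where k: "\<forall>j<m. k j = (\<Sum>l<s. V j l *\<^sub>R \<kappa> l)"
    using nullspace_basis_combination[OF V constraint] by blast
  have "B z1 z1 = B z0 z0"
    unfolding z1 by (rule bilinear_erk_invariant[OF bil b0 MV k k]) (use stage tangent in auto)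
  then show "quad_form C z1 = quad_form C z0"
    unfolding B_def quad_form_def .
qed

lemma second_difference_estimate:
  fixes H :: "'a::real_inner \<Rightarrow> real"
  assumes grad: "\<forall>z. (H has_derivative (\<lambda>v. gH z \<bullet> v)) (at z)"
    and lin: "linear G"
    and approx: "\<forall>w. norm w < \<delta> \<longrightarrow> norm (gH (p + w) - gH p - G w) \<le> \<epsilon> * norm w"
    and \<epsilon>: "0 \<le> \<epsilon>"
    and t: "0 < t" "t * (norm x + norm y) < \<delta>"
  shows "\<bar>H (p + t *\<^sub>R x + t *\<^sub>R y) - H (p + t *\<^sub>R x) - H (p + t *\<^sub>R y) + H p - t\<^sup>2 * (G x \<bullet> y)\<bar>
          \<le> 2 * \<epsilon> * t\<^sup>2 * (norm x + norm y)\<^sup>2"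
proof -
  define \<phi> where "\<phi> \<sigma> = H (p + t *\<^sub>R x + \<sigma> *\<^sub>R (t *\<^sub>R y)) - H (p + \<sigma> *\<^sub>R (t *\<^sub>R y))" for \<sigma>
  define \<phi>' where "\<phi>' \<sigma> r = gH (p + t *\<^sub>R x + \<sigma> *\<^sub>R (t *\<^sub>R y)) \<bullet> (r *\<^sub>R (t *\<^sub>R y))
       - gH (p + \<sigma> *\<^sub>R (t *\<^sub>R y)) \<bullet> (r *\<^sub>R (t *\<^sub>R y))" for \<sigma> r :: real
  have "(\<phi> has_derivative \<phi>' \<sigma>) (at \<sigma> within {0..1})" for \<sigma>
    unfolding \<phi>_def[abs_def] \<phi>'_def[abs_def]
    by (intro has_derivative_diff has_derivative_compose[OF _ grad[rule_format]])
      (auto intro!: derivative_eq_intros)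
  then obtain \<theta> where \<theta>: "\<theta> \<in> {0<..<1}" "\<phi> 1 - \<phi> 0 = \<phi>' \<theta> 1"
    using mvt_simple[of 0 1 \<phi> \<phi>'] by auto
  define w1 where "w1 = t *\<^sub>R x + \<theta> *\<^sub>R (t *\<^sub>R y)"
  define w2 where "w2 = \<theta> *\<^sub>R (t *\<^sub>R y)"
  define R where "R w = gH (p + w) - gH p - G w" for w
  have remainder: "norm (R w) \<le> \<epsilon> * (t * (norm x + norm y))"
    if "norm w \<le> t * (norm x + norm y)" for w
    using approx[rule_format, of w] that t(2) \<epsilon> unfolding R_def
    by (meson le_less_trans mult_left_mono order_trans)
  have "norm w2 \<le> t * norm y"
    using \<theta>(1) t(1) by (simp add: w2_def mult_left_le_one_le)
  then have w2: "norm w2 \<le> t * (norm x + norm y)"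
    using t(1) by (smt (verit) mult_left_mono norm_ge_zero)
  have w1: "norm w1 \<le> t * (norm x + norm y)"
    using norm_triangle_ineq[of "t *\<^sub>R x" w2] \<open>norm w2 \<le> t * norm y\<close> t(1)
    by (simp add: w1_def w2_def algebra_simps)
  have "G w1 = t *\<^sub>R G x + G w2"
    using lin by (simp add: w1_def w2_def linear_add linear_scale)
  then have difference: "H (p + t *\<^sub>R x + t *\<^sub>R y) - H (p + t *\<^sub>R x) - H (p + t *\<^sub>R y) + H p
      - t\<^sup>2 * (G x \<bullet> y) = (R w1 - R w2) \<bullet> (t *\<^sub>R y)"
    using \<theta>(2) unfolding \<phi>_def \<phi>'_def R_def w1_def w2_def
    by (simp add: inner_diff_left power2_eq_square algebra_simps)
  have "\<bar>(R w1 - R w2) \<bullet> (t *\<^sub>R y)\<bar> \<le> (norm (R w1) + norm (R w2)) * (t * norm y)"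
    using Cauchy_Schwarz_ineq2[of "R w1 - R w2" "t *\<^sub>R y"] norm_triangle_ineq4[of "R w1" "R w2"] t(1)
    by (smt (verit) mult_right_mono norm_ge_zero norm_scaleR)
  also have "\<dots> \<le> (2 * \<epsilon> * (t * (norm x + norm y))) * (t * (norm x + norm y))"
    using remainder[OF w1] remainder[OF w2] t(1) \<epsilon>
    by (intro mult_mono) auto
  finally show ?thesis
    unfolding difference by (simp add: power2_eq_square algebra_simps)
qed

text \<open>Symmetry of the second derivative when the gradient is differentiable only at p:
  the second difference of H in the directions t x, t y is symmetric in x and y and, by
  the estimate above, equals t^2 (G x \<bullet> y) + o(t^2).\<close>

lemma gradient_derivative_symmetric:
  fixes H :: "'a::real_inner \<Rightarrow> real"
  assumes grad: "\<forall>z. (H has_derivative (\<lambda>v. gH z \<bullet> v)) (at z)"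
    and G: "(gH has_derivative G) (at p)"
  shows "G x \<bullet> y = x \<bullet> G y"
proof -
  have lin: "linear G"
    using G has_derivative_linear by blast
  define K where "K = 4 * (norm x + norm y)\<^sup>2"
  have bound: "\<bar>G x \<bullet> y - G y \<bullet> x\<bar> \<le> \<epsilon> * K" if \<epsilon>: "\<epsilon> > 0" for \<epsilon>
  proof -
    obtain \<delta> where "\<delta> > 0"
      and "\<forall>z. norm (z - p) < \<delta> \<longrightarrow> norm (gH z - gH p - G (z - p)) \<le> \<epsilon> * norm (z - p)"
      using G \<epsilon> unfolding has_derivative_at_alt by blast
    then have approx: "\<forall>w. norm w < \<delta> \<longrightarrow> norm (gH (p + w) - gH p - G w) \<le> \<epsilon> * norm w"
      by (metis add_diff_cancel_left')
    define t where "t = \<delta> / (2 * (norm x + norm y + 1))"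
    have n: "norm x + norm y + 1 > 0"
      by (simp add: add_nonneg_pos)
    have "t > 0"
      using \<open>\<delta> > 0\<close> n by (simp add: t_def)
    have "t * (norm x + norm y) < t * (norm x + norm y + 1)"
      using \<open>t > 0\<close> by simp
    also have "\<dots> = \<delta> / 2"
      using n by (simp add: t_def field_simps)
    also have "\<dots> < \<delta>"
      using \<open>\<delta> > 0\<close> by simp
    finally have t: "t > 0" "t * (norm x + norm y) < \<delta>" "t * (norm y + norm x) < \<delta>"
      using \<open>t > 0\<close> by (simp_all add: add.commute)
    define \<Delta> where "\<Delta> = H (p + t *\<^sub>R x + t *\<^sub>R y) - H (p + t *\<^sub>R x) - H (p + t *\<^sub>R y) + H p"
    have est_xy: "\<bar>\<Delta> - t\<^sup>2 * (G x \<bullet> y)\<bar> \<le> 2 * \<epsilon> * t\<^sup>2 * (norm x + norm y)\<^sup>2"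
      unfolding \<Delta>_def using \<epsilon> by (intro second_difference_estimate[OF grad lin approx _ t(1,2)]) simp
    have est_yx: "\<bar>\<Delta> - t\<^sup>2 * (G y \<bullet> x)\<bar> \<le> 2 * \<epsilon> * t\<^sup>2 * (norm x + norm y)\<^sup>2"
      using second_difference_estimate[OF grad lin approx _ t(1,3)] \<epsilon>
      unfolding \<Delta>_def by (simp add: ac_simps)
    have "t\<^sup>2 * \<bar>G x \<bullet> y - G y \<bullet> x\<bar> = \<bar>(\<Delta> - t\<^sup>2 * (G y \<bullet> x)) - (\<Delta> - t\<^sup>2 * (G x \<bullet> y))\<bar>"
      by (simp add: abs_mult right_diff_distrib[symmetric])
    also have "\<dots> \<le> \<bar>\<Delta> - t\<^sup>2 * (G y \<bullet> x)\<bar> + \<bar>\<Delta> - t\<^sup>2 * (G x \<bullet> y)\<bar>"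
      by (rule abs_triangle_ineq4)
    also have "\<dots> \<le> t\<^sup>2 * (\<epsilon> * K)"
      using est_xy est_yx by (simp add: K_def algebra_simps)
    finally have "t\<^sup>2 * \<bar>G x \<bullet> y - G y \<bullet> x\<bar> \<le> t\<^sup>2 * (\<epsilon> * K)" .
    then show ?thesis
      using t(1) by simp
  qed
  have "\<bar>G x \<bullet> y - G y \<bullet> x\<bar> \<le> 0"
  proof (rule field_le_epsilon)
    fix e :: real assume "e > 0"
    have "K \<ge> 0"
      by (simp add: K_def)
    then have "\<bar>G x \<bullet> y - G y \<bullet> x\<bar> \<le> e / (K + 1) * K"
      using bound[of "e / (K + 1)"] \<open>e > 0\<close> by simp
    also have "\<dots> \<le> e"
      using \<open>e > 0\<close> \<open>K \<ge> 0\<close> by (simp add: field_simps)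
    finally show "\<bar>G x \<bullet> y - G y \<bullet> x\<bar> \<le> 0 + e" by simp
  qed
  then show ?thesis
    by (simp add: inner_commute)
qed

lemma canon_J_component:
  "canon_J a $ k = (case k of Inl i \<Rightarrow> a $ Inr i | Inr i \<Rightarrow> - (a $ Inl i))"
  unfolding canon_J_def by simp

lemma inner_canon_J: "canon_J a \<bullet> canon_J b = a \<bullet> b"
  unfolding inner_vec_def
  by (subst (1 2) UNIV_Plus_UNIV[symmetric], simp only: sum.Plus finite)
    (simp add: canon_J_component add.commute)

lemma canon_J_canon_J: "canon_J (canon_J a) = - a"
  by (simp add: vec_eq_iff canon_J_component split: sum.split)

lemma linear_canon_J: "linear canon_J"
  by (auto simp: linear_iff vec_eq_iff canon_J_component split: sum.split)

lemma bounded_linear_canon_J: "bounded_linear canon_J"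
  using linear_canon_J linear_conv_bounded_linear by blast

lemma bilinear_symp_form: "bilinear symp_form"
  unfolding bilinear_def symp_form_def[abs_def] linear_iff
  by (simp add: linear_add[OF linear_canon_J] linear_scale[OF linear_canon_J] inner_add_left inner_add_right)

lemma symp_form_canon_J_self_adjoint:
  assumes "\<And>x y. G x \<bullet> y = x \<bullet> G y"
  shows "symp_form (canon_J (G x)) y + symp_form x (canon_J (G y)) = 0"
  using assms unfolding symp_form_def inner_canon_J canon_J_canon_J by simp

lemma has_derivative_unique_on_open:
  assumes "(f has_derivative F) (at z)" and "(g has_derivative G) (at z)"
    and "open U" and "z \<in> U" and "\<forall>x\<in>U. f x = g x"
  shows "F = G"
proof -
  have "(g has_derivative F) (at z)"
    using has_derivative_transform_within_open[OF assms(1,3,4)] assms(5) by blast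
  then show ?thesis
    using assms(2) by (rule has_derivative_unique)
qed

lemma derivative_of_linear_constraint:
  fixes K :: "nat \<Rightarrow> 'a::real_normed_vector \<Rightarrow> 'b::real_normed_vector"
  assumes K: "\<forall>j<m. (K j has_derivative D j) (at z)"
    and U: "open U" "z \<in> U" and constraint: "\<forall>x\<in>U. (\<Sum>j<m. c j *\<^sub>R K j x) = 0"
  shows "(\<Sum>j<m. c j *\<^sub>R D j w) = 0"
proof -
  have "((\<lambda>x. \<Sum>j<m. c j *\<^sub>R K j x) has_derivative (\<lambda>w. \<Sum>j<m. c j *\<^sub>R D j w)) (at z)"
    using K by (auto intro!: derivative_eq_intros)
  then have "(\<lambda>w. \<Sum>j<m. c j *\<^sub>R D j w) = (\<lambda>w. 0)"
    using has_derivative_unique_on_open[OF _ has_derivative_const U] constraint by blast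
  then show ?thesis
    by metis
qed

lemma derivative_of_implicit_stage:
  fixes K :: "nat \<Rightarrow> 'a::real_normed_vector \<Rightarrow> 'a"
  assumes K: "\<forall>j<m. (K j has_derivative D j) (at z)" and i: "i < m"
    and U: "open U" "z \<in> U"
    and stage: "\<forall>x\<in>U. K i x = F (x + h *\<^sub>R (\<Sum>j<m. c j *\<^sub>R K j x))"
    and F: "(F has_derivative F') (at (z + h *\<^sub>R (\<Sum>j<m. c j *\<^sub>R K j z)))"
  shows "D i w = F' (w + h *\<^sub>R (\<Sum>j<m. c j *\<^sub>R D j w))"
proof -
  have "((\<lambda>x. x + h *\<^sub>R (\<Sum>j<m. c j *\<^sub>R K j x)) has_derivative
      (\<lambda>w. w + h *\<^sub>R (\<Sum>j<m. c j *\<^sub>R D j w))) (at z)"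
    using K by (auto intro!: derivative_eq_intros)
  from has_derivative_compose[OF this F]
  have "D i = (\<lambda>w. F' (w + h *\<^sub>R (\<Sum>j<m. c j *\<^sub>R D j w)))"
    using has_derivative_unique_on_open[OF _ _ U] stage K i by blast
  then show ?thesis
    by simp
qed

lemma erk_step_derivative_symplectic:
  fixes K :: "nat \<Rightarrow> real^('k::finite + 'k) \<Rightarrow> real^('k + 'k)"
  assumes "s \<le> m" and V: "nullspace_basis (m - s) m s d V"
    and b0: "\<forall>i. s \<le> i \<and> i < m \<longrightarrow> b i = 0"
    and MV: "\<forall>p<s. \<forall>q<s. (\<Sum>i<m. \<Sum>j<m. V i p * M_mat s a b i j * V j q) = 0"
    and grad: "\<forall>z. (H has_derivative (\<lambda>v. gH z \<bullet> v)) (at z)"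
    and gH: "\<forall>z. gH differentiable (at z)"
    and U: "open U" "z \<in> U"
    and step: "\<forall>x\<in>U. erk_step m s a b d (\<lambda>x. canon_J (gH x)) h x (\<lambda>i. K i x)
                        (x + h *\<^sub>R (\<Sum>i<m. b i *\<^sub>R K i x))"
    and D: "\<forall>j<m. (K j has_derivative D j) (at z)"
  shows "symp_form (u + h *\<^sub>R (\<Sum>i<m. b i *\<^sub>R D i u)) (v + h *\<^sub>R (\<Sum>i<m. b i *\<^sub>R D i v))
    = symp_form u v"
proof -
  have constraint: "\<forall>r<m - s. (\<Sum>j<m. d r j *\<^sub>R D j w) = 0" for w
    using step by (intro allI impI derivative_of_linear_constraint[OF D U]) (auto simp: erk_step_def)
  obtain \<kappa> where \<kappa>: "\<forall>j<m. D j u = (\<Sum>l<s. V j l *\<^sub>R \<kappa> l)"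
    using nullspace_basis_combination[OF V constraint] by blast
  obtain \<mu> where \<mu>: "\<forall>j<m. D j v = (\<Sum>l<s. V j l *\<^sub>R \<mu> l)"
    using nullspace_basis_combination[OF V constraint] by blast
  define G where "G i = frechet_derivative gH (at (z + h *\<^sub>R (\<Sum>j<m. a i j *\<^sub>R K j z)))" for i
  have G: "(gH has_derivative G i) (at (z + h *\<^sub>R (\<Sum>j<m. a i j *\<^sub>R K j z)))" for i
    using gH unfolding G_def frechet_derivative_works by blast
  have stage: "D i w = canon_J (G i (w + h *\<^sub>R (\<Sum>j<m. a i j *\<^sub>R D j w)))" if "i < s" for i w
  proof (rule derivative_of_implicit_stage[OF D _ U])
    show "i < m"
      using \<open>i < s\<close> \<open>s \<le> m\<close> by simp
    show "\<forall>x\<in>U. K i x = canon_J (gH (x + h *\<^sub>R (\<Sum>j<m. a i j *\<^sub>R K j x)))"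
      using step \<open>i < s\<close> by (simp add: erk_step_def)
    show "((\<lambda>x. canon_J (gH x)) has_derivative (\<lambda>w. canon_J (G i w)))
        (at (z + h *\<^sub>R (\<Sum>j<m. a i j *\<^sub>R K j z)))"
      using G by (rule bounded_linear.has_derivative[OF bounded_linear_canon_J])
  qed
  have "\<forall>i<s. symp_form (D i u) (v + h *\<^sub>R (\<Sum>j<m. a i j *\<^sub>R D j v))
              + symp_form (u + h *\<^sub>R (\<Sum>j<m. a i j *\<^sub>R D j u)) (D i v) = 0"
  proof (intro allI impI)
    fix i assume "i < s"
    show "symp_form (D i u) (v + h *\<^sub>R (\<Sum>j<m. a i j *\<^sub>R D j v))
        + symp_form (u + h *\<^sub>R (\<Sum>j<m. a i j *\<^sub>R D j u)) (D i v) = 0"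
      unfolding stage[OF \<open>i < s\<close>]
      by (rule symp_form_canon_J_self_adjoint) (rule gradient_derivative_symmetric[OF grad G])
  qed
  then show ?thesis
    by (rule bilinear_erk_invariant[OF bilinear_symp_form b0 MV \<kappa> \<mu>])
qed

lemma erk_symplectic:
  assumes "s \<le> m" and "nullspace_basis (m - s) m s d V"
    and "\<forall>i. s \<le> i \<and> i < m \<longrightarrow> b i = 0"
    and "\<forall>p<s. \<forall>q<s. (\<Sum>i<m. \<Sum>j<m. V i p * M_mat s a b i j * V j q) = 0"
  shows "symplectic_method TYPE('k::finite) m s a b d"
  unfolding symplectic_method_def
proof (intro allI impI)
  fix H :: "real^('k + 'k) \<Rightarrow> real" and f h U and K :: "nat \<Rightarrow> real^('k + 'k) \<Rightarrow> real^('k + 'k)"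
  assume ham: "hamiltonian_field H f" and U: "open U"
    and K: "\<forall>i<m. \<forall>z\<in>U. K i differentiable (at z)"
    and step: "\<forall>z\<in>U. erk_step m s a b d f h z (\<lambda>i. K i z) (z + h *\<^sub>R (\<Sum>i<m. b i *\<^sub>R K i z))"
  from ham obtain gH where grad: "\<forall>z. (H has_derivative (\<lambda>v. gH z \<bullet> v)) (at z)"
    and gH: "\<forall>z. gH differentiable (at z)"
    and f: "\<forall>z. f z = (\<chi> k. case k of Inl i \<Rightarrow> gH z $ Inr i | Inr i \<Rightarrow> - (gH z $ Inl i))"
    unfolding hamiltonian_field_def by blast
  have "f = (\<lambda>x. canon_J (gH x))"
    using f by (simp add: canon_J_def fun_eq_iff)
  note step' = step[unfolded this]
  show "symplectic_on U (\<lambda>z. z + h *\<^sub>R (\<Sum>i<m. b i *\<^sub>R K i z))"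
    unfolding symplectic_on_def
  proof
    fix z assume "z \<in> U"
    define D where "D i = frechet_derivative (K i) (at z)" for i
    have D: "\<forall>j<m. (K j has_derivative D j) (at z)"
      using K \<open>z \<in> U\<close> unfolding D_def frechet_derivative_works by blast
    have "((\<lambda>z. z + h *\<^sub>R (\<Sum>i<m. b i *\<^sub>R K i z)) has_derivative
        (\<lambda>w. w + h *\<^sub>R (\<Sum>i<m. b i *\<^sub>R D i w))) (at z)"
      using D by (auto intro!: derivative_eq_intros)
    moreover have "\<forall>u v. symp_form (u + h *\<^sub>R (\<Sum>i<m. b i *\<^sub>R D i u)) (v + h *\<^sub>R (\<Sum>i<m. b i *\<^sub>R D i v))
        = symp_form u v"
      using erk_step_derivative_symplectic[OF assms grad gH U \<open>z \<in> U\<close> step' D] by blast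
    ultimately show "\<exists>\<Phi>'. ((\<lambda>z. z + h *\<^sub>R (\<Sum>i<m. b i *\<^sub>R K i z)) has_derivative \<Phi>') (at z)
        \<and> (\<forall>u v. symp_form (\<Phi>' u) (\<Phi>' v) = symp_form u v)"
      by blast
  qed
qed

theorem proposition3:
  fixes m s :: nat and a d V :: "nat \<Rightarrow> nat \<Rightarrow> real" and b :: "nat \<Rightarrow> real"
  assumes "s \<le> m"
    and "full_row_rank (m - s) m d"
    and "nullspace_basis (m - s) m s d V"
    and "\<forall>i. s \<le> i \<and> i < m \<longrightarrow> b i = 0"
    and "\<forall>p<s. \<forall>q<s. (\<Sum>i<m. \<Sum>j<m. V i p * M_mat s a b i j * V j q) = 0"
  shows "quadratic_preserving TYPE('n::finite) m s a b d \<and> symplectic_method TYPE('k::finite) m s a b d"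
  using erk_quadratic_preserving[OF assms(3-5)] erk_symplectic[OF assms(1,3-5)] by blast

end
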